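(* Let $E=(E_C,\gamma_{C'C},\delta_{CC'})$ be an object of the category $\mathcal{A}$ (defined in the context), and let $O$ denote the unique minimal face of $\mathcal{C}$ (the face $\{0\}$). Then the vector space $E_O$ becomes a left $R$-module if each generator $e_C$ ($C\in\mathcal{C}$) is made to act by $e_C(v)=\delta_{CO}\gamma_{OC}(v)$.
   Context: Let $\mathcal{H}$ be a finite arrangement of linear hyperplanes in $\mathbb{R}^n$; for each $H\in\mathcal{H}$ fix a real linear form $f_H$ with $H=\ker f_H$. For $x\in\mathbb{R}^n$ its sign vector $\sigma(x)\in\{+,-,0\}^{\mathcal{H}}$ records the sign of $f_H(x)$ for each $H$. The faces of $\mathcal{H}$ are the classes of points with equal sign vectors; $\mathcal{C}$ is the set of faces, partially ordered by $C'\le C$ iff $C'\subseteq\overline{C}$. Chambers are faces of dimension $n$. Two faces $A,B$ of the same dimension $d\ge 1$ oppose each other if they have the same real linear span and there is a face $C$ of dimension $d-1$ with $C\le A$, $C\le B$ and $\sigma(A)_H=-\sigma(B)_H$ for every $H$ with $\sigma(C)_H=0$. Faces $A,B,C$ are collinear if some straight line segment in $\mathbb{R}^n$ meets $A$, $B$, $C$ in that order. The algebra $R$: let $R_0$ be the $\mathbb{C}$-algebra generated by symbols $e_C$, $C\in\mathcal{C}$, subject to (R1) $e_C^2=e_C$; (R2) $e_Ae_C=e_Ae_Be_C$ whenever $A,B,C$ are collinear; (R3) $e_Ae_B=e_B=e_Be_A$ whenever $A\le B$. Then $R$ is the noncommutative localisation of $R_0$ obtained by inverting all elements $e_Ae_Be_A+(1-e_A)$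 with $A,B$ opposing faces. A double representation $E$ of $\mathcal{C}$ consists of vector spaces $E_C$ ($C\in\mathcal{C}$) and linear maps $\gamma_{C'C}:E_{C'}\to E_C$, $\delta_{CC'}:E_C\to E_{C'}$ for each $C'\le C$, with $\gamma_{CC}=\delta_{CC}=\mathrm{id}$, $\gamma_{C_2C_3}\gamma_{C_1C_2}=\gamma_{C_1C_3}$ and $\delta_{C_2C_1}\delta_{C_3C_2}=\delta_{C_3C_1}$ for $C_1\le C_2\le C_3$. The category $\mathcal{A}$ is the full subcategory of finite-dimensional double representations satisfying: (monotonicity) $\gamma_{C'C}\delta_{CC'}=\mathrm{id}_{E_C}$ for all $C'\le C$, so that $\varphi_{AB}:=\gamma_{CB}\delta_{AC}:E_A\to E_B$ is independent of the choice of $C$ with $C\le A$, $C\le B$; (transitivity) $\varphi_{AC}=\varphi_{BC}\varphi_{AB}$ whenever $A,B,C$ are collinear; (invertibility) $\varphi_{AB}$ is an isomorphism whenever $A,B$ oppose each other. *)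

theory Defs
  imports "HOL-Analysis.Analysis"
begin

definition lin_arrangement :: "'a::euclidean_space set set \<Rightarrow> ('a set \<Rightarrow> 'a \<Rightarrow> real) \<Rightarrow> bool" where
  "lin_arrangement H f \<longleftrightarrow> finite H \<and>
     (\<forall>Hy\<in>H. linear (f Hy) \<and> (\<exists>x. f Hy x \<noteq> 0) \<and> Hy = {x. f Hy x = 0})"

definition sign_vec :: "'a::euclidean_space set set \<Rightarrow> ('a set \<Rightarrow> 'a \<Rightarrow> real) \<Rightarrow> 'a \<Rightarrow> 'a set \<Rightarrow> real" where
  "sign_vec H f x = (\<lambda>Hy. if Hy \<in> H then sgn (f Hy x) else 0)"

definition faces :: "'a::euclidean_space set set \<Rightarrow> ('a set \<Rightarrow> 'a \<Rightarrow> real) \<Rightarrow> 'a set set" where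
  "faces H f = {{y. sign_vec H f y = sign_vec H f x} | x. True}"

definition face_le :: "'a::euclidean_space set \<Rightarrow> 'a set \<Rightarrow> bool" where
  "face_le C' C \<longleftrightarrow> C' \<subseteq> closure C"

text \<open>Sign vector of a face (common sign vector of its points).\<close>
definition face_sign :: "'a::euclidean_space set set \<Rightarrow> ('a set \<Rightarrow> 'a \<Rightarrow> real) \<Rightarrow> 'a set \<Rightarrow> 'a set \<Rightarrow> real" where
  "face_sign H f C = sign_vec H f (SOME x. x \<in> C)"

text \<open>The unique minimal face: the face containing the origin.\<close>
definition zero_face :: "'a::euclidean_space set set \<Rightarrow> ('a set \<Rightarrow> 'a \<Rightarrow> real) \<Rightarrow> 'a set" where
  "zero_face H f = {y. sign_vec H f y = sign_vec H f 0}"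

definition opposing :: "'a::euclidean_space set set \<Rightarrow> ('a set \<Rightarrow> 'a \<Rightarrow> real) \<Rightarrow> 'a set \<Rightarrow> 'a set \<Rightarrow> bool" where
  "opposing H f A B \<longleftrightarrow> A \<in> faces H f \<and> B \<in> faces H f \<and>
     dim A = dim B \<and> dim A \<ge> 1 \<and> span A = span B \<and>
     (\<exists>C\<in>faces H f. dim C + 1 = dim A \<and> face_le C A \<and> face_le C B \<and>
        (\<forall>Hy\<in>H. face_sign H f C Hy = 0 \<longrightarrow> face_sign H f A Hy = - face_sign H f B Hy))"

definition faces_collinear :: "'a::real_vector set \<Rightarrow> 'a set \<Rightarrow> 'a set \<Rightarrow> bool" where
  "faces_collinear A B C \<longleftrightarrow> (\<exists>x\<in>A. \<exists>y\<in>B. \<exists>z\<in>C. y \<in> closed_segment x z)"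

text \<open>Finite-dimensional complex vector spaces are realised as C-linear subspaces of
  an ambient C^m ('m an arbitrary finite index type); every finite family of
  finite-dimensional spaces embeds this way.\<close>

definition csubspace :: "(complex^'m) set \<Rightarrow> bool" where
  "csubspace V \<longleftrightarrow> 0 \<in> V \<and> (\<forall>x\<in>V. \<forall>y\<in>V. x + y \<in> V) \<and> (\<forall>c. \<forall>x\<in>V. c *s x \<in> V)"

text \<open>C-linear map from V to W (only its values on V matter).\<close>
definition clin_map :: "(complex^'m) set \<Rightarrow> (complex^'m) set \<Rightarrow> (complex^'m \<Rightarrow> complex^'m) \<Rightarrow> bool" where
  "clin_map V W g \<longleftrightarrow> (\<forall>x\<in>V. g x \<in> W) \<and> (\<forall>x\<in>V. \<forall>y\<in>V. g (x + y) = g x + g y) \<and>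
     (\<forall>c. \<forall>x\<in>V. g (c *s x) = c *s g x)"

text \<open>E C is the space at the face C; gam C' C : E C' \<rightarrow> E C and del C C' : E C \<rightarrow> E C'
  for C' \<le> C.\<close>
definition double_rep ::
  "'a::euclidean_space set set \<Rightarrow> ('a set \<Rightarrow> 'a \<Rightarrow> real) \<Rightarrow> ('a set \<Rightarrow> (complex^'m) set)
   \<Rightarrow> ('a set \<Rightarrow> 'a set \<Rightarrow> complex^'m \<Rightarrow> complex^'m) \<Rightarrow> ('a set \<Rightarrow> 'a set \<Rightarrow> complex^'m \<Rightarrow> complex^'m) \<Rightarrow> bool" where
  "double_rep H f E gam del \<longleftrightarrow>
     (\<forall>C\<in>faces H f. csubspace (E C)) \<and>
     (\<forall>C'\<in>faces H f. \<forall>C\<in>faces H f. face_le C' C \<longrightarrow>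
         clin_map (E C') (E C) (gam C' C) \<and> clin_map (E C) (E C') (del C C')) \<and>
     (\<forall>C\<in>faces H f. \<forall>v\<in>E C. gam C C v = v \<and> del C C v = v) \<and>
     (\<forall>C1\<in>faces H f. \<forall>C2\<in>faces H f. \<forall>C3\<in>faces H f.
         face_le C1 C2 \<and> face_le C2 C3 \<longrightarrow>
           (\<forall>v\<in>E C1. gam C2 C3 (gam C1 C2 v) = gam C1 C3 v) \<and>
           (\<forall>v\<in>E C3. del C2 C1 (del C3 C2 v) = del C3 C1 v))"

text \<open>phi A B = gam C B \<circ> del A C for some face C \<le> A, C \<le> B (independent of the
  choice under monotonicity).\<close>
definition phi ::
  "'a::euclidean_space set set \<Rightarrow> ('a set \<Rightarrow> 'a \<Rightarrow> real)
   \<Rightarrow> ('a set \<Rightarrow> 'a set \<Rightarrow> complex^'m \<Rightarrow> complex^'m) \<Rightarrow> ('a set \<Rightarrow> 'a set \<Rightarrow> complex^'m \<Rightarrow> complex^'m) \<Rightarrow> 'a set \<Rightarrow> 'a set \<Rightarrow> complex^'m \<Rightarrow> complex^'m" where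
  "phi H f gam del A B =
     (let C = (SOME C. C \<in> faces H f \<and> face_le C A \<and> face_le C B) in (\<lambda>v. gam C B (del A C v)))"

definition in_cat_A ::
  "'a::euclidean_space set set \<Rightarrow> ('a set \<Rightarrow> 'a \<Rightarrow> real) \<Rightarrow> ('a set \<Rightarrow> (complex^'m) set)
   \<Rightarrow> ('a set \<Rightarrow> 'a set \<Rightarrow> complex^'m \<Rightarrow> complex^'m) \<Rightarrow> ('a set \<Rightarrow> 'a set \<Rightarrow> complex^'m \<Rightarrow> complex^'m) \<Rightarrow> bool" where
  "in_cat_A H f E gam del \<longleftrightarrow>
     double_rep H f E gam del \<and>
     \<comment> \<open>monotonicity\<close>
     (\<forall>C'\<in>faces H f. \<forall>C\<in>faces H f. face_le C' C \<longrightarrow> (\<forall>v\<in>E C. gam C' C (del C C' v) = v)) \<and>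
     \<comment> \<open>transitivity\<close>
     (\<forall>A\<in>faces H f. \<forall>B\<in>faces H f. \<forall>C\<in>faces H f. faces_collinear A B C \<longrightarrow>
        (\<forall>v\<in>E A. phi H f gam del A C v = phi H f gam del B C (phi H f gam del A B v))) \<and>
     \<comment> \<open>invertibility\<close>
     (\<forall>A B. opposing H f A B \<longrightarrow> bij_betw (phi H f gam del A B) (E A) (E B))"

text \<open>R is the localisation of R0 (generated by e_C subject to R1-R3) at the elements
  e_A e_B e_A + (1 - e_A), A, B opposing. By the universal properties of presented
  algebras and of localisation, a left R-module structure on a complex vector space V
  in which e_C acts by act C is the same as a family of C-linear endomorphisms act C
  of V satisfying R1-R3 such that every act A \<circ> act B \<circ> act A + (id - act A) with
  A, B opposing is invertible.\<close>
definition R_module_action ::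
  "'a::euclidean_space set set \<Rightarrow> ('a set \<Rightarrow> 'a \<Rightarrow> real) \<Rightarrow> (complex^'m) set
   \<Rightarrow> ('a set \<Rightarrow> complex^'m \<Rightarrow> complex^'m) \<Rightarrow> bool" where
  "R_module_action H f V act \<longleftrightarrow>
     csubspace V \<and>
     (\<forall>C\<in>faces H f. clin_map V V (act C)) \<and>
     \<comment> \<open>(R1)\<close>
     (\<forall>C\<in>faces H f. \<forall>v\<in>V. act C (act C v) = act C v) \<and>
     \<comment> \<open>(R2)\<close>
     (\<forall>A\<in>faces H f. \<forall>B\<in>faces H f. \<forall>C\<in>faces H f. faces_collinear A B C \<longrightarrow>
        (\<forall>v\<in>V. act A (act C v) = act A (act B (act C v)))) \<and>
     \<comment> \<open>(R3)\<close>
     (\<forall>A\<in>faces H f. \<forall>B\<in>faces H f. face_le A B \<longrightarrow>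
        (\<forall>v\<in>V. act A (act B v) = act B v \<and> act B (act A v) = act B v)) \<and>
     \<comment> \<open>localisation: inverted elements act invertibly\<close>
     (\<forall>A B. opposing H f A B \<longrightarrow>
        bij_betw (\<lambda>v. act A (act B (act A v)) + (v - act A v)) V V)"

end

theory Submission
  imports Defs
begin

text \<open>The zero face O lies in the closure of every face, so phi A B factors as
  gam O B \<circ> del A O, and the action of e_C on E O is e_C = del C O \<circ> gam O C.
  Since gam O C \<circ> del C O = id, each e_C is idempotent, relation (R3) follows from
  functoriality of gam and del, and (R2) is transitivity of phi transported to E O.
  For opposing A, B the space E O splits as the image of del A O plus the kernel of
  gam O A; on the latter e_A e_B e_A + (1 - e_A) is the identity, and on the former it
  is conjugate to the automorphism phi B A \<circ> phi A B of E A, hence it is invertible.\<close>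

lemma zero_face_in_faces: "zero_face H f \<in> faces H f"
  unfolding zero_face_def faces_def by blast

lemma zero_face_vanishing:
  assumes "lin_arrangement H f" and "y \<in> zero_face H f" and "Hy \<in> H"
  shows "f Hy y = 0"
proof -
  have "f Hy 0 = 0"
    using assms(1,3) linear_0 unfolding lin_arrangement_def by blast
  moreover have "sgn (f Hy y) = sgn (f Hy 0)"
    using assms(2,3) unfolding zero_face_def sign_vec_def by (auto dest: fun_cong[where x = Hy])
  ultimately show ?thesis
    by (simp add: sgn_0_0)
qed

lemma face_le_zero_face:
  assumes arr: "lin_arrangement H f" and C: "C \<in> faces H f"
  shows "face_le (zero_face H f) C"
  unfolding face_le_def
proof
  fix y
  assume y: "y \<in> zero_face H f"
  obtain x where C_eq: "C = {z. sign_vec H f z = sign_vec H f x}"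
    using C unfolding faces_def by blast
  have shifted_in_C: "y + t *\<^sub>R x \<in> C" if "t > 0" for t
  proof -
    have lin: "f Hy (y + t *\<^sub>R x) = t * f Hy x" if "Hy \<in> H" for Hy
    proof -
      have "linear (f Hy)"
        using arr that unfolding lin_arrangement_def by blast
      then show ?thesis
        using zero_face_vanishing[OF arr y that] by (simp add: linear_add linear_scale)
    qed
    have "sign_vec H f (y + t *\<^sub>R x) = sign_vec H f x"
      unfolding sign_vec_def using lin \<open>t > 0\<close> by (intro ext) (simp add: sgn_mult)
    then show ?thesis
      using C_eq by blast
  qed
  have "(\<lambda>n. y + inverse (real (Suc n)) *\<^sub>R x) \<longlonglongrightarrow> y"
    using tendsto_add[OF tendsto_const tendsto_scaleR[OF LIMSEQ_inverse_real_of_nat tendsto_const]]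
    by simp
  then show "y \<in> closure C"
    unfolding closure_sequential using shifted_in_C
    by (metis of_nat_0_less_iff positive_imp_inverse_positive zero_less_Suc)
qed

lemma opposing_sym: "opposing H f A B \<Longrightarrow> opposing H f B A"
  unfolding opposing_def by (metis minus_minus)

lemma csubspace_diff: "csubspace V \<Longrightarrow> x \<in> V \<Longrightarrow> y \<in> V \<Longrightarrow> x - y \<in> V"
  unfolding csubspace_def by (metis diff_conv_add_uminus vector_sneg_minus1)

lemma clin_map_diff:
  assumes "csubspace V" "clin_map V W g" "x \<in> V" "y \<in> V"
  shows "g (x - y) = g x - g y"
proof -
  have "g (x - y + y) = g (x - y) + g y"
    using assms csubspace_diff unfolding clin_map_def by blast
  then show ?thesis
    by simp
qed

lemma clin_map_comp: "clin_map U V g \<Longrightarrow> clin_map V W h \<Longrightarrow> clin_map U W (\<lambda>x. h (g x))"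
  unfolding clin_map_def by auto

text \<open>If g \<circ> d = id on W, then V is the direct sum of d W and the kernel of g, and the
  map below acts as d \<circ> T \<circ> g on the first summand and as the identity on the second.\<close>

lemma bij_betw_extend_through_retraction:
  assumes V: "csubspace V" and W: "csubspace W"
    and g: "clin_map V W g" and d: "clin_map W V d"
    and gd: "\<And>w. w \<in> W \<Longrightarrow> g (d w) = w" and T: "bij_betw T W W"
  shows "bij_betw (\<lambda>v. d (T (g v)) + (v - d (g v))) V V"
proof -
  define M where "M v = d (T (g v)) + (v - d (g v))" for v
  have gV: "g v \<in> W" if "v \<in> V" for v
    using g that unfolding clin_map_def by blast
  have dW: "d w \<in> V" if "w \<in> W" for w
    using d that unfolding clin_map_def by blast
  have TW: "T w \<in> W" if "w \<in> W" for w
    using T that by (meson bij_betw_apply)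
  have g_add: "g (x + y) = g x + g y" if "x \<in> V" "y \<in> V" for x y
    using g that unfolding clin_map_def by blast
  have complement_in: "v - d (g v) \<in> V" if "v \<in> V" for v
    using csubspace_diff[OF V] that dW gV by blast
  have g_complement: "g (v - d (g v)) = 0" if "v \<in> V" for v
    using clin_map_diff[OF V g] that dW gV gd by simp
  have M_in: "M v \<in> V" if "v \<in> V" for v
    using V that dW TW gV complement_in unfolding M_def csubspace_def by blast
  have g_M: "g (M v) = T (g v)" if "v \<in> V" for v
    using that g_add dW TW gV complement_in g_complement gd unfolding M_def by simp
  have "inj_on M V"
  proof (rule inj_onI)
    fix x y
    assume x: "x \<in> V" and y: "y \<in> V" and eq: "M x = M y"
    have "T (g x) = T (g y)"
      using g_M[OF x] g_M[OF y] eq by simp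
    then have "g x = g y"
      using T gV x y unfolding bij_betw_def inj_on_def by blast
    then show "x = y"
      using eq unfolding M_def by simp
  qed
  moreover have "V \<subseteq> M ` V"
  proof
    fix w
    assume w: "w \<in> V"
    obtain u where u: "u \<in> W" "T u = g w"
      using T gV[OF w] unfolding bij_betw_def by (metis imageE)
    define v where "v = d u + (w - d (g w))"
    have v_in: "v \<in> V"
      unfolding v_def using V dW[OF u(1)] complement_in[OF w] unfolding csubspace_def by blast
    have "g v = u"
      unfolding v_def using g_add[OF dW[OF u(1)] complement_in[OF w]] g_complement[OF w] gd u(1)
      by simp
    then have "M v = w"
      using u unfolding M_def v_def by simp
    then show "w \<in> M ` V"
      using v_in by blast
  qed
  ultimately show ?thesis
    using M_in unfolding bij_betw_def M_def by blast
qed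

locale cat_A_object =
  fixes H :: "'a::euclidean_space set set"
    and f :: "'a set \<Rightarrow> 'a \<Rightarrow> real"
    and E :: "'a set \<Rightarrow> (complex^'m) set"
    and gam del :: "'a set \<Rightarrow> 'a set \<Rightarrow> complex^'m \<Rightarrow> complex^'m"
  assumes arrangement: "lin_arrangement H f"
    and in_cat_A: "in_cat_A H f E gam del"
begin

abbreviation Z :: "'a set" where
  "Z \<equiv> zero_face H f"

abbreviation act :: "'a set \<Rightarrow> complex^'m \<Rightarrow> complex^'m" where
  "act C v \<equiv> del C Z (gam Z C v)"

abbreviation \<phi> :: "'a set \<Rightarrow> 'a set \<Rightarrow> complex^'m \<Rightarrow> complex^'m" where
  "\<phi> \<equiv> phi H f gam del"

lemma Z_in_faces: "Z \<in> faces H f"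
  by (rule zero_face_in_faces)

lemma Z_le: "C \<in> faces H f \<Longrightarrow> face_le Z C"
  using face_le_zero_face[OF arrangement] .

lemma is_double_rep: "double_rep H f E gam del"
  using in_cat_A unfolding in_cat_A_def by blast

lemma E_csubspace: "C \<in> faces H f \<Longrightarrow> csubspace (E C)"
  using is_double_rep unfolding double_rep_def by blast

lemma gam_clin:
  "C' \<in> faces H f \<Longrightarrow> C \<in> faces H f \<Longrightarrow> face_le C' C \<Longrightarrow> clin_map (E C') (E C) (gam C' C)"
  using is_double_rep unfolding double_rep_def by blast

lemma del_clin:
  "C' \<in> faces H f \<Longrightarrow> C \<in> faces H f \<Longrightarrow> face_le C' C \<Longrightarrow> clin_map (E C) (E C') (del C C')"
  using is_double_rep unfolding double_rep_def by blast

lemma gam_trans: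
  "\<lbrakk>A \<in> faces H f; B \<in> faces H f; C \<in> faces H f; face_le A B; face_le B C; v \<in> E A\<rbrakk>
   \<Longrightarrow> gam B C (gam A B v) = gam A C v"
  using is_double_rep unfolding double_rep_def by blast

lemma del_trans:
  "\<lbrakk>A \<in> faces H f; B \<in> faces H f; C \<in> faces H f; face_le A B; face_le B C; v \<in> E C\<rbrakk>
   \<Longrightarrow> del B A (del C B v) = del C A v"
  using is_double_rep unfolding double_rep_def by blast

lemma gam_del:
  "\<lbrakk>C' \<in> faces H f; C \<in> faces H f; face_le C' C; v \<in> E C\<rbrakk> \<Longrightarrow> gam C' C (del C C' v) = v"
  using in_cat_A unfolding in_cat_A_def by blast

lemma phi_collinear:
  "\<lbrakk>A \<in> faces H f; B \<in> faces H f; C \<in> faces H f; faces_collinear A B C; v \<in> E A\<rbrakk>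
   \<Longrightarrow> \<phi> A C v = \<phi> B C (\<phi> A B v)"
  using in_cat_A unfolding in_cat_A_def by blast

lemma phi_opposing_bij: "opposing H f A B \<Longrightarrow> bij_betw (\<phi> A B) (E A) (E B)"
  using in_cat_A unfolding in_cat_A_def by blast

lemma gam_Z_in: "C \<in> faces H f \<Longrightarrow> v \<in> E Z \<Longrightarrow> gam Z C v \<in> E C"
  using gam_clin[OF Z_in_faces _ Z_le] unfolding clin_map_def by blast

lemma del_Z_in: "C \<in> faces H f \<Longrightarrow> v \<in> E C \<Longrightarrow> del C Z v \<in> E Z"
  using del_clin[OF Z_in_faces _ Z_le] unfolding clin_map_def by blast

lemma phi_via_Z:
  assumes A: "A \<in> faces H f" and B: "B \<in> faces H f" and w: "w \<in> E A"
  shows "\<phi> A B w = gam Z B (del A Z w)"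
proof -
  define D where "D = (SOME C. C \<in> faces H f \<and> face_le C A \<and> face_le C B)"
  have "D \<in> faces H f \<and> face_le D A \<and> face_le D B"
    unfolding D_def by (rule someI[of _ Z]) (use Z_in_faces Z_le A B in blast)
  then have D: "D \<in> faces H f" "face_le D A" "face_le D B"
    by auto
  have w_D: "del A D w \<in> E D"
    using del_clin[OF D(1) A D(2)] w unfolding clin_map_def by blast
  have "\<phi> A B w = gam D B (del A D w)"
    unfolding phi_def D_def Let_def by simp
  also have "\<dots> = gam D B (gam Z D (del D Z (del A D w)))"
    using gam_del[OF Z_in_faces D(1) Z_le[OF D(1)] w_D] by simp
  also have "\<dots> = gam Z B (del D Z (del A D w))"
    using gam_trans[OF Z_in_faces D(1) B Z_le[OF D(1)] D(3)] del_Z_in[OF D(1) w_D] by simp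
  also have "\<dots> = gam Z B (del A Z w)"
    using del_trans[OF Z_in_faces D(1) A Z_le[OF D(1)] D(2) w] by simp
  finally show ?thesis .
qed

lemma act_clin: "C \<in> faces H f \<Longrightarrow> clin_map (E Z) (E Z) (act C)"
  using clin_map_comp gam_clin del_clin Z_in_faces Z_le by blast

lemma act_idem: "C \<in> faces H f \<Longrightarrow> v \<in> E Z \<Longrightarrow> act C (act C v) = act C v"
  using gam_del[OF Z_in_faces _ Z_le] gam_Z_in by simp

lemma act_collinear:
  assumes A: "A \<in> faces H f" and B: "B \<in> faces H f" and C: "C \<in> faces H f"
    and col: "faces_collinear A B C" and v: "v \<in> E Z"
  shows "act A (act C v) = act A (act B (act C v))"
proof -
  have col': "faces_collinear C B A"
    using col unfolding faces_collinear_def by (metis closed_segment_commute)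
  have u: "gam Z C v \<in> E C"
    using gam_Z_in[OF C v] .
  have "act A (act C v) = del A Z (\<phi> C A (gam Z C v))"
    using phi_via_Z[OF C A u] by simp
  also have "\<dots> = del A Z (\<phi> B A (\<phi> C B (gam Z C v)))"
    using phi_collinear[OF C B A col' u] by simp
  also have "\<dots> = act A (act B (act C v))"
    using phi_via_Z[OF C B u] phi_via_Z[OF B A] gam_Z_in[OF B] del_Z_in[OF C u] by simp
  finally show ?thesis .
qed

lemma act_le_left:
  assumes A: "A \<in> faces H f" and B: "B \<in> faces H f" and AB: "face_le A B" and v: "v \<in> E Z"
  shows "act A (act B v) = act B v"
proof -
  have u: "del B A (gam Z B v) \<in> E A"
    using del_clin[OF A B AB] gam_Z_in[OF B v] unfolding clin_map_def by blast
  have del_BZ: "del B Z (gam Z B v) = del A Z (del B A (gam Z B v))"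
    using del_trans[OF Z_in_faces A B Z_le[OF A] AB gam_Z_in[OF B v]] by simp
  show ?thesis
    unfolding del_BZ using gam_del[OF Z_in_faces A Z_le[OF A] u] by simp
qed

lemma act_le_right:
  assumes A: "A \<in> faces H f" and B: "B \<in> faces H f" and AB: "face_le A B" and v: "v \<in> E Z"
  shows "act B (act A v) = act B v"
proof -
  have gam_ZB: "gam Z B w = gam A B (gam Z A w)" if "w \<in> E Z" for w
    using gam_trans[OF Z_in_faces A B Z_le[OF A] AB that] by simp
  show ?thesis
    unfolding gam_ZB[OF v] gam_ZB[OF del_Z_in[OF A gam_Z_in[OF A v]]]
    using gam_del[OF Z_in_faces A Z_le[OF A] gam_Z_in[OF A v]] by simp
qed

lemma act_opposing_bij:
  assumes op: "opposing H f A B"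
  shows "bij_betw (\<lambda>v. act A (act B (act A v)) + (v - act A v)) (E Z) (E Z)"
proof -
  have A: "A \<in> faces H f" and B: "B \<in> faces H f"
    using op unfolding opposing_def by auto
  have T: "bij_betw (\<lambda>w. \<phi> B A (\<phi> A B w)) (E A) (E A)"
    using bij_betw_trans[OF phi_opposing_bij[OF op] phi_opposing_bij[OF opposing_sym[OF op]]]
    by (simp add: comp_def)
  have "bij_betw (\<lambda>v. del A Z (\<phi> B A (\<phi> A B (gam Z A v))) + (v - act A v)) (E Z) (E Z)"
    using bij_betw_extend_through_retraction[OF E_csubspace[OF Z_in_faces] E_csubspace[OF A]
        gam_clin[OF Z_in_faces A Z_le[OF A]] del_clin[OF Z_in_faces A Z_le[OF A]]
        gam_del[OF Z_in_faces A Z_le[OF A]] T] .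
  moreover have "del A Z (\<phi> B A (\<phi> A B (gam Z A v))) = act A (act B (act A v))"
    if "v \<in> E Z" for v
    using phi_via_Z[OF A B gam_Z_in[OF A that]] phi_via_Z[OF B A] gam_Z_in[OF B]
      del_Z_in[OF A gam_Z_in[OF A that]] by simp
  ultimately show ?thesis
    by (simp cong: bij_betw_cong)
qed

end

theorem proposition2p6:
  fixes H :: "'a::euclidean_space set set"
    and f :: "'a set \<Rightarrow> 'a \<Rightarrow> real"
    and E :: "'a set \<Rightarrow> (complex^'m) set"
    and gam del :: "'a set \<Rightarrow> 'a set \<Rightarrow> complex^'m \<Rightarrow> complex^'m"
  assumes "lin_arrangement H f"
    and "in_cat_A H f E gam del"
  shows "R_module_action H f (E (zero_face H f))
           (\<lambda>C v. del C (zero_face H f) (gam (zero_face H f) C v))"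
proof -
  interpret cat_A_object H f E gam del
    using assms by unfold_locales
  show ?thesis
    unfolding R_module_action_def
    using E_csubspace[OF Z_in_faces] act_clin act_idem act_collinear act_le_left act_le_right
      act_opposing_bij
    by blast
qed

end
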